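(* Let $\mathbb G=V_1\times V_2$ and $\mathbb G'=V_1'\times V_2'$ be step-two Carnot groups. Then $\mathcal A_h(\mathbb G)=\mathcal A(V_1\times V_2)$ and $\mathcal A_h(\mathbb G')=\mathcal A(V_1'\times V_2')$ if and only if $\mathcal A_h(\mathbb G\times\mathbb G')=\mathcal A((V_1\oplus V_1')\times(V_2\oplus V_2'))$.
   Context: A step-two Carnot group is $\mathbb G=V_1\times V_2$ ($V_1,V_2$ finite-dimensional real vector spaces, $V_2\ne\{0\}$) with a bilinear skew-symmetric $[\cdot,\cdot]:V_1\times V_1\to V_2$ whose image spans $V_2$, and group law $(x,z)\cdot(x',z')=(x+x',z+z'+[x,x'])$. $\mathcal A_h(\mathbb G)$ is the space of maps $f:\mathbb G\to\mathbb R$ such that for all $(x,z)\in\mathbb G$, $y\in V_1$, $t\mapsto f((x,z)\cdot(ty,0))$ is affine; $\mathcal A(W)$ is the space of maps affine in the usual sense on a vector space $W$. The direct product $\mathbb G\times\mathbb G'$ is $(V_1\oplus V_1')\times(V_2\oplus V_2')$ with bracket $[x+x',y+y']:=[x,y]+[x',y']'$ for $x,y\in V_1$, $x',y'\in V_1'$. *)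

theory Defs
  imports "HOL-Analysis.Analysis"
begin

text \<open>Finite-dimensional real vector spaces are modelled as types of class euclidean_space.
A step-two Carnot group structure on V1 x V2 is given by its bracket.\<close>

definition step2_bracket :: "('a::euclidean_space \<Rightarrow> 'a \<Rightarrow> 'b::euclidean_space) \<Rightarrow> bool" where
  "step2_bracket br \<longleftrightarrow> bilinear br \<and> (\<forall>x y. br y x = - br x y)
     \<and> span (range (\<lambda>(x, y). br x y)) = UNIV \<and> (UNIV :: 'b set) \<noteq> {0}"

definition carnot_mult ::
  "('a::euclidean_space \<Rightarrow> 'a \<Rightarrow> 'b::euclidean_space) \<Rightarrow> ('a \<times> 'b) \<Rightarrow> ('a \<times> 'b) \<Rightarrow> ('a \<times> 'b)" where
  "carnot_mult br p q = (fst p + fst q, snd p + snd q + br (fst p) (fst q))"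

definition affine_map :: "('v::real_vector \<Rightarrow> real) \<Rightarrow> bool" where
  "affine_map f \<longleftrightarrow> (\<exists>g c. linear g \<and> (\<forall>x. f x = g x + c))"

definition horiz_affine ::
  "('a::euclidean_space \<Rightarrow> 'a \<Rightarrow> 'b::euclidean_space) \<Rightarrow> (('a \<times> 'b) \<Rightarrow> real) set" where
  "horiz_affine br = {f. \<forall>p y. affine_map (\<lambda>t::real. f (carnot_mult br p (t *\<^sub>R y, 0)))}"

definition prod_bracket ::
  "('a::euclidean_space \<Rightarrow> 'a \<Rightarrow> 'b::euclidean_space) \<Rightarrow> ('c::euclidean_space \<Rightarrow> 'c \<Rightarrow> 'd::euclidean_space)
    \<Rightarrow> ('a \<times> 'c) \<Rightarrow> ('a \<times> 'c) \<Rightarrow> ('b \<times> 'd)" where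
  "prod_bracket br br' u v = (br (fst u) (fst v), br' (snd u) (snd v))"

end

theory Submission
  imports Defs
begin

(* Affine maps are horizontally affine because horizontal lines are affine lines, and
   horizontal lines of G x G' project to horizontal lines of each factor, so the property
   passes from the product to the factors.  Conversely, a horizontally affine F on G x G'
   is affine in each factor separately, hence its cross term
   F(p,q) - F(p,0) - F(0,q) + F(0,0) is bilinear.  Along a product of horizontal lines
   t |-> (p + t a, q + t b), with a = (y,[x,y]) and b = (y',[x',y']'), this cross term is a
   quadratic polynomial in t with leading coefficient equal to its value at (a, b); since F
   is affine there, that value is 0.  As the bracket spans V2, these horizontal directions
   span V1 x V2, so the cross term vanishes identically and F is affine. *)

lemma affine_map_iff_linear: "affine_map f \<longleftrightarrow> linear (\<lambda>x. f x - f 0)"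
proof
  assume "affine_map f"
  then obtain g c where "linear g" "\<And>x. f x = g x + c"
    unfolding affine_map_def by blast
  then show "linear (\<lambda>x. f x - f 0)"
    by (simp add: linear_0)
next
  assume "linear (\<lambda>x. f x - f 0)"
  then show "affine_map f"
    unfolding affine_map_def by (metis diff_add_cancel)
qed

lemma affine_map_compose_linear:
  assumes "affine_map f" and "linear g"
  shows "affine_map (f \<circ> g)"
proof -
  have "(\<lambda>x. (f \<circ> g) x - (f \<circ> g) 0) = (\<lambda>x. f x - f 0) \<circ> g"
    using linear_0[OF \<open>linear g\<close>] by auto
  then show ?thesis
    using assms linear_compose by (metis affine_map_iff_linear)
qed

lemma affine_map_along_line:
  assumes "affine_map f"
  shows "affine_map (\<lambda>t. f (p + t *\<^sub>R v))"
proof -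
  let ?L = "\<lambda>x. f x - f 0"
  have "linear ?L" using assms by (simp add: affine_map_iff_linear)
  then have "f (p + t *\<^sub>R v) - f p = t * ?L v" for t
    using linear_add[of ?L p "t *\<^sub>R v"] linear_scale[of ?L t v] by simp
  then show ?thesis
    unfolding affine_map_def by (metis real_vector.linear_scale_left real_scaleR_def diff_add_cancel)
qed

lemma affine_map_midpoint:
  assumes "affine_map f"
  shows "f (u + v) + f (u - v) = 2 * f u"
proof -
  let ?L = "\<lambda>x. f x - f 0"
  have "linear ?L" using assms by (simp add: affine_map_iff_linear)
  then show ?thesis
    using linear_add[of ?L u v] linear_diff[of ?L u v] by simp
qed

lemma separately_affine_cross_term_bilinear:
  fixes F :: "'p::real_vector \<Rightarrow> 'q::real_vector \<Rightarrow> real"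
  assumes "\<And>q. affine_map (\<lambda>p. F p q)" and "\<And>p. affine_map (\<lambda>q. F p q)"
  shows "bilinear (\<lambda>p q. F p q - F p 0 - F 0 q + F 0 0)"
  unfolding bilinear_def
proof (intro conjI allI)
  fix p
  have "linear (\<lambda>q. (F p q - F p 0) - (F 0 q - F 0 0))"
    using assms(2)[of p] assms(2)[of 0]
    by (simp add: affine_map_iff_linear linear_compose_sub)
  then show "linear (\<lambda>q. F p q - F p 0 - F 0 q + F 0 0)"
    by (simp add: algebra_simps)
next
  fix q
  have "linear (\<lambda>p. (F p q - F 0 q) - (F p 0 - F 0 0))"
    using assms(1)[of q] assms(1)[of 0]
    by (simp add: affine_map_iff_linear linear_compose_sub)
  then show "linear (\<lambda>p. F p q - F p 0 - F 0 q + F 0 0)"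
    by (simp add: algebra_simps)
qed

lemma separately_affine_cross_term_vanishes:
  fixes F :: "'p::real_vector \<Rightarrow> 'q::real_vector \<Rightarrow> real"
  assumes sep1: "\<And>q. affine_map (\<lambda>p. F p q)" and sep2: "\<And>p. affine_map (\<lambda>q. F p q)"
    and diag: "affine_map (\<lambda>t. F (p + t *\<^sub>R a) (q + t *\<^sub>R b))"
  shows "F a b - F a 0 - F 0 b + F 0 0 = 0"
proof -
  define G where "G p q = F p q - F p 0 - F 0 q + F 0 0" for p q
  have "bilinear G"
    unfolding G_def[abs_def] using sep1 sep2 by (rule separately_affine_cross_term_bilinear)
  then have "G (p + a) (q + b) + G (p - a) (q - b) = 2 * G p q + 2 * G a b"
    by (simp add: bilinear_ladd bilinear_radd bilinear_lsub bilinear_rsub)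
  moreover have "G (p + a) (q + b) + G (p - a) (q - b) = 2 * G p q"
    using affine_map_midpoint[OF diag, of 0 1] affine_map_midpoint[OF sep1, of p a 0]
      affine_map_midpoint[OF sep2, of 0 q b]
    unfolding G_def by simp
  ultimately show ?thesis unfolding G_def by simp
qed

lemma separately_affine_imp_affine:
  fixes F :: "'p::real_vector \<Rightarrow> 'q::real_vector \<Rightarrow> real"
  assumes sep1: "\<And>q. affine_map (\<lambda>p. F p q)" and sep2: "\<And>p. affine_map (\<lambda>q. F p q)"
    and "span A = UNIV" and "span B = UNIV"
    and diag: "\<And>a b. a \<in> A \<Longrightarrow> b \<in> B
      \<Longrightarrow> \<exists>p q. affine_map (\<lambda>t. F (p + t *\<^sub>R a) (q + t *\<^sub>R b))"
  shows "affine_map (\<lambda>(p, q). F p q)"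
proof -
  have cross_zero: "F p q - F p 0 - F 0 q + F 0 0 = 0" for p q
  proof (rule bilinear_eq[where f = "\<lambda>p q. F p q - F p 0 - F 0 q + F 0 0" and g = "\<lambda>_ _. 0"
        and S = UNIV and T = UNIV and B = A and C = B])
    show "bilinear (\<lambda>p q. F p q - F p 0 - F 0 q + F 0 0)"
      using sep1 sep2 by (rule separately_affine_cross_term_bilinear)
    show "\<And>a b. a \<in> A \<Longrightarrow> b \<in> B \<Longrightarrow> F a b - F a 0 - F 0 b + F 0 0 = 0"
      using diag separately_affine_cross_term_vanishes[OF sep1 sep2] by blast
  qed (use \<open>span A = UNIV\<close> \<open>span B = UNIV\<close> in \<open>simp_all add: bilinear_def linear_zero\<close>)
  have "linear (\<lambda>p. F p 0 - F 0 0)" "linear (\<lambda>q. F 0 q - F 0 0)"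
    using sep1[of 0] sep2[of 0] by (simp_all add: affine_map_iff_linear)
  from linear_compose_add[OF linear_compose[OF real_vector.linear_fst this(1)]
      linear_compose[OF real_vector.linear_snd this(2)]]
  have "linear (\<lambda>x. (F (fst x) 0 - F 0 0) + (F 0 (snd x) - F 0 0))"
    by (simp add: o_def)
  moreover have "(\<lambda>x. (\<lambda>(p, q). F p q) x - (\<lambda>(p, q). F p q) 0)
      = (\<lambda>x. (F (fst x) 0 - F 0 0) + (F 0 (snd x) - F 0 0))"
  proof
    fix x :: "'p \<times> 'q"
    show "(\<lambda>(p, q). F p q) x - (\<lambda>(p, q). F p q) 0
        = (F (fst x) 0 - F 0 0) + (F 0 (snd x) - F 0 0)"
      using cross_zero[of "fst x" "snd x"] by (simp add: case_prod_beta zero_prod_def)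
  qed
  ultimately show ?thesis
    by (simp add: affine_map_iff_linear)
qed

lemma carnot_mult_horizontal_line:
  assumes "bilinear br"
  shows "carnot_mult br p (t *\<^sub>R y, 0) = p + t *\<^sub>R (y, br (fst p) y)"
  using assms by (simp add: carnot_mult_def bilinear_rmul prod_eq_iff)

lemma affine_subset_horiz_affine:
  assumes "bilinear br"
  shows "{f. affine_map f} \<subseteq> horiz_affine br"
  unfolding horiz_affine_def carnot_mult_horizontal_line[OF assms]
  using affine_map_along_line by blast

lemma bilinear_prod_bracket:
  assumes "bilinear br" and "bilinear br'"
  shows "bilinear (prod_bracket br br')"
  using assms unfolding bilinear_def prod_bracket_def linear_iff
  by (simp add: prod_eq_iff)

lemma span_horizontal_directions:
  assumes "step2_bracket br"
  shows "span (range (\<lambda>(x, y). (y, br x y))) = UNIV"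
proof -
  let ?S = "range (\<lambda>(x, y). (y, br x y))"
  have bil: "bilinear br" using assms step2_bracket_def by blast
  have graph: "(y, br x y) \<in> span ?S" for x y
    by (rule span_base, rule image_eqI[where x = "(x, y)"]) simp_all
  have horizontal: "(y, 0) \<in> span ?S" for y
    using graph[where x = 0] bilinear_lzero[OF bil] by simp
  have "(0, br x y) \<in> span ?S" for x y
    using span_diff[OF graph[where x = x and y = y] horizontal[where y = y]] by simp
  then have "(\<lambda>w. (0, w)) ` range (\<lambda>(x, y). br x y) \<subseteq> span ?S"
    by auto
  then have "span ((\<lambda>w. (0, w)) ` range (\<lambda>(x, y). br x y)) \<subseteq> span ?S"
    by (simp add: span_minimal)
  moreover have "linear (\<lambda>w::'b. (0::'a, w))"
    by (simp add: linear_iff)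
  ultimately have vertical: "(0, w) \<in> span ?S" for w
    using assms span_linear_image unfolding step2_bracket_def by blast
  have "(y, w) \<in> span ?S" for y w
    using span_add[OF horizontal vertical] by simp
  then show ?thesis by auto
qed

definition prod_point :: "'a \<times> 'b \<Rightarrow> 'c \<times> 'd \<Rightarrow> ('a \<times> 'c) \<times> ('b \<times> 'd)" where
  "prod_point p q = ((fst p, fst q), (snd p, snd q))"

lemma horiz_affine_pullback:
  assumes "f \<in> horiz_affine br'"
    and "\<And>P Y t. \<phi> (carnot_mult br P (t *\<^sub>R Y, 0)) = carnot_mult br' (\<phi> P) (t *\<^sub>R \<psi> Y, 0)"
  shows "f \<circ> \<phi> \<in> horiz_affine br"
proof -
  have "affine_map (\<lambda>t. (f \<circ> \<phi>) (carnot_mult br P (t *\<^sub>R Y, 0)))" for P Y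
    using assms(1) unfolding horiz_affine_def o_def assms(2) by blast
  then show ?thesis
    unfolding horiz_affine_def by blast
qed

lemma horiz_affine_factor_subset_affine:
  fixes br :: "'a::euclidean_space \<Rightarrow> 'a \<Rightarrow> 'b::euclidean_space"
    and br' :: "'c::euclidean_space \<Rightarrow> 'c \<Rightarrow> 'd::euclidean_space"
  assumes "horiz_affine (prod_bracket br br') \<subseteq> {f. affine_map f}"
  shows "horiz_affine br \<subseteq> {f. affine_map f}" and "horiz_affine br' \<subseteq> {f. affine_map f}"
proof safe
  fix f assume "f \<in> horiz_affine br"
  then have "f \<circ> (\<lambda>P. (fst (fst P), fst (snd P))) \<in> horiz_affine (prod_bracket br br')"
    by (rule horiz_affine_pullback[where \<psi> = fst])
      (simp add: carnot_mult_def prod_bracket_def)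
  then have "affine_map (f \<circ> (\<lambda>P::('a \<times> 'c) \<times> ('b \<times> 'd). (fst (fst P), fst (snd P))))"
    using assms by blast
  then have "affine_map (f \<circ> (\<lambda>P. (fst (fst P), fst (snd P))) \<circ> (\<lambda>p. prod_point p (0::'c \<times> 'd)))"
    by (rule affine_map_compose_linear) (simp add: prod_point_def linear_iff)
  then show "affine_map f"
    by (simp add: prod_point_def o_def)
next
  fix f assume "f \<in> horiz_affine br'"
  then have "f \<circ> (\<lambda>P. (snd (fst P), snd (snd P))) \<in> horiz_affine (prod_bracket br br')"
    by (rule horiz_affine_pullback[where \<psi> = snd])
      (simp add: carnot_mult_def prod_bracket_def)
  then have "affine_map (f \<circ> (\<lambda>P::('a \<times> 'c) \<times> ('b \<times> 'd). (snd (fst P), snd (snd P))))"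
    using assms by blast
  then have "affine_map (f \<circ> (\<lambda>P. (snd (fst P), snd (snd P))) \<circ> prod_point (0::'a \<times> 'b))"
    by (rule affine_map_compose_linear) (simp add: prod_point_def linear_iff)
  then show "affine_map f"
    by (simp add: prod_point_def o_def)
qed

lemma horiz_affine_prod_subset_affine:
  fixes br :: "'a::euclidean_space \<Rightarrow> 'a \<Rightarrow> 'b::euclidean_space"
    and br' :: "'c::euclidean_space \<Rightarrow> 'c \<Rightarrow> 'd::euclidean_space"
  assumes step2: "step2_bracket br" "step2_bracket br'"
    and affine: "horiz_affine br \<subseteq> {f. affine_map f}" "horiz_affine br' \<subseteq> {f. affine_map f}"
  shows "horiz_affine (prod_bracket br br') \<subseteq> {f. affine_map f}"
proof safe
  fix F assume F: "F \<in> horiz_affine (prod_bracket br br')"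
  have bil: "bilinear br" "bilinear br'"
    using step2 by (simp_all add: step2_bracket_def)
  have "F \<circ> (\<lambda>p. prod_point p q) \<in> horiz_affine br" for q
    using F by (rule horiz_affine_pullback[where \<psi> = "\<lambda>y. (y, 0)"])
      (simp add: carnot_mult_def prod_bracket_def prod_point_def bilinear_rzero[OF bil(2)])
  then have sep1: "affine_map (\<lambda>p. F (prod_point p q))" for q
    using affine(1) unfolding o_def by blast
  have "F \<circ> prod_point p \<in> horiz_affine br'" for p
    using F by (rule horiz_affine_pullback[where \<psi> = "\<lambda>y. (0, y)"])
      (simp add: carnot_mult_def prod_bracket_def prod_point_def bilinear_rzero[OF bil(1)])
  then have sep2: "affine_map (\<lambda>q. F (prod_point p q))" for p
    using affine(2) unfolding o_def by blast
  have diag: "affine_map (\<lambda>t. F (prod_point ((x, 0) + t *\<^sub>R (y, br x y))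
      ((x', 0) + t *\<^sub>R (y', br' x' y'))))" for x y x' y'
  proof -
    have line: "prod_point ((x, 0) + t *\<^sub>R (y, br x y)) ((x', 0) + t *\<^sub>R (y', br' x' y'))
        = carnot_mult (prod_bracket br br') (prod_point (x, 0) (x', 0)) (t *\<^sub>R (y, y'), 0)" for t
      by (simp add: carnot_mult_def prod_bracket_def prod_point_def bil bilinear_rmul)
    have "affine_map (\<lambda>t. F (carnot_mult (prod_bracket br br') (prod_point (x, 0) (x', 0))
        (t *\<^sub>R (y, y'), 0)))"
      using F unfolding horiz_affine_def by blast
    then show ?thesis
      by (simp only: line)
  qed
  have "affine_map (\<lambda>(p, q). F (prod_point p q))"
    using sep1 sep2 span_horizontal_directions[OF step2(1)] span_horizontal_directions[OF step2(2)]
  proof (rule separately_affine_imp_affine)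
    fix a b
    assume "a \<in> range (\<lambda>(x, y). (y, br x y))" and "b \<in> range (\<lambda>(x, y). (y, br' x y))"
    then obtain x y x' y' where "a = (y, br x y)" and "b = (y', br' x' y')"
      by auto
    then show "\<exists>p q. affine_map (\<lambda>t. F (prod_point (p + t *\<^sub>R a) (q + t *\<^sub>R b)))"
      using diag by blast
  qed
  then have "affine_map ((\<lambda>(p, q). F (prod_point p q))
      \<circ> (\<lambda>P. ((fst (fst P), fst (snd P)), (snd (fst P), snd (snd P)))))"
    by (rule affine_map_compose_linear) (simp add: linear_iff)
  then show "affine_map F"
    by (simp add: prod_point_def o_def)
qed

theorem proposition6p4:
  fixes br :: "'a::euclidean_space \<Rightarrow> 'a \<Rightarrow> 'b::euclidean_space"
    and br' :: "'c::euclidean_space \<Rightarrow> 'c \<Rightarrow> 'd::euclidean_space"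
  assumes "step2_bracket br" and "step2_bracket br'"
  shows "(horiz_affine br = {f. affine_map f} \<and> horiz_affine br' = {f. affine_map f})
     \<longleftrightarrow> horiz_affine (prod_bracket br br') = {f. affine_map f}"
proof -
  have "bilinear br" and "bilinear br'"
    using assms by (simp_all add: step2_bracket_def)
  then have "{f. affine_map f} \<subseteq> horiz_affine br" and "{f. affine_map f} \<subseteq> horiz_affine br'"
    and "{f. affine_map f} \<subseteq> horiz_affine (prod_bracket br br')"
    by (simp_all add: affine_subset_horiz_affine bilinear_prod_bracket)
  then show ?thesis
    using horiz_affine_prod_subset_affine[OF assms] horiz_affine_factor_subset_affine
    by (metis subset_antisym)
qed

end
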